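(* Let $G$ be a loopy graph with $\mathrm{vm}(G)=k$ which is edge-maximal with respect to this property, i.e. adding to $G$ any edge not already in $G$ (between vertices of $G$, loops included) yields a graph with vertex-maximal matching number different from $k$. Let $\ell=\lambda(G)$ be the number of loops of $G$. Then $G$ contains $LK_\ell$; that is, the loopy vertices of $G$ are pairwise adjacent.
   Context: A loopy graph is a finite graph with no isolated vertices and no multiple edges, possibly with loops. A vertex is loopy if it carries a loop; $\lambda(G)$ is the number of loops (= number of loopy vertices). A matching is a set of pairwise vertex-disjoint edges, loops allowed; $\mathrm{vm}(G)$ is the maximum number of vertices touched by a matching of $G$. $LK_\ell$ denotes the complete graph $K_\ell$ with a loop attached at each vertex. *)

theory Defs
  imports Main
begin

text \<open>A loopy graph on vertex set V: edges are 1-element sets (loops) or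
2-element sets (ordinary edges); finite, no isolated vertices, no multiple edges
(automatic since E is a set).\<close>

definition loopy_graph :: "'a set \<Rightarrow> 'a set set \<Rightarrow> bool" where
  "loopy_graph V E \<longleftrightarrow> finite V \<and>
     (\<forall>e\<in>E. e \<subseteq> V \<and> (card e = 1 \<or> card e = 2)) \<and>
     (\<forall>v\<in>V. \<exists>e\<in>E. v \<in> e)"

definition is_edge_on :: "'a set \<Rightarrow> 'a set \<Rightarrow> bool" where
  "is_edge_on V e \<longleftrightarrow> e \<subseteq> V \<and> (card e = 1 \<or> card e = 2)"

definition matching :: "'a set set \<Rightarrow> 'a set set \<Rightarrow> bool" where
  "matching E M \<longleftrightarrow> M \<subseteq> E \<and> (\<forall>e\<in>M. \<forall>f\<in>M. e \<noteq> f \<longrightarrow> e \<inter> f = {})"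

definition vm :: "'a set set \<Rightarrow> nat" where
  "vm E = Max {card (\<Union>M) | M. matching E M}"

definition loopy :: "'a set set \<Rightarrow> 'a \<Rightarrow> bool" where
  "loopy E v \<longleftrightarrow> {v} \<in> E"

end

theory Submission
  imports Defs
begin

text \<open>If both ends of an edge carry loops, the edge is redundant for covering vertices by a
matching: in any matching it can be traded for the two loops, which touch the same vertices.
So adding such an edge never changes \<open>vm\<close>, and edge-maximality forces it to be present already.\<close>

lemma matching_mono: "matching E M \<Longrightarrow> E \<subseteq> E' \<Longrightarrow> matching E' M"
  unfolding matching_def by blast

lemma matching_replace_edge_by_loops:
  assumes M: "matching (insert {u, v} E) M" and loops: "{u} \<in> E" "{v} \<in> E"
  obtains M' where "matching E M'" and "\<Union>M' = \<Union>M"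
proof (cases "{u, v} \<in> M")
  case False
  with M have "matching E M" unfolding matching_def by blast
  then show ?thesis using that by blast
next
  case True
  define R where "R = M - {{u, v}}"
  have M_sub: "M \<subseteq> insert {u, v} E"
    and M_disj: "\<And>e f. e \<in> M \<Longrightarrow> f \<in> M \<Longrightarrow> e \<noteq> f \<Longrightarrow> e \<inter> f = {}"
    using M unfolding matching_def by blast+
  have R_sub: "R \<subseteq> E" using M_sub unfolding R_def by blast
  have R_disj: "u \<notin> f" "v \<notin> f" if "f \<in> R" for f
    using M_disj[OF _ True, of f] that unfolding R_def by blast+
  have "matching E (insert {u} (insert {v} R))"
    unfolding matching_def
  proof (intro conjI ballI impI)
    show "insert {u} (insert {v} R) \<subseteq> E" using loops R_sub by blast
  next
    fix e f
    assume e: "e \<in> insert {u} (insert {v} R)" and f: "f \<in> insert {u} (insert {v} R)"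
      and "e \<noteq> f"
    show "e \<inter> f = {}"
    proof (cases "e \<in> R \<and> f \<in> R")
      case True
      then show ?thesis using M_disj \<open>e \<noteq> f\<close> unfolding R_def by blast
    next
      case False
      then show ?thesis using e f \<open>e \<noteq> f\<close> R_disj by auto
    qed
  qed
  moreover have "\<Union>(insert {u} (insert {v} R)) = \<Union>M"
    using True unfolding R_def by blast
  ultimately show ?thesis using that by blast
qed

lemma vm_insert_edge_between_loops:
  assumes "{u} \<in> E" "{v} \<in> E"
  shows "vm (insert {u, v} E) = vm E"
proof -
  have "{card (\<Union>M) | M. matching (insert {u, v} E) M} = {card (\<Union>M) | M. matching E M}"
  proof (intro set_eqI iffI)
    fix x assume "x \<in> {card (\<Union>M) | M. matching (insert {u, v} E) M}"
    then obtain M where M: "matching (insert {u, v} E) M" and x: "x = card (\<Union>M)"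
      by blast
    obtain M' where "matching E M'" and "\<Union>M' = \<Union>M"
      using matching_replace_edge_by_loops[OF M assms] .
    then have "matching E M' \<and> x = card (\<Union>M')" using x by simp
    then show "x \<in> {card (\<Union>M) | M. matching E M}" by blast
  next
    fix x assume "x \<in> {card (\<Union>M) | M. matching E M}"
    then show "x \<in> {card (\<Union>M) | M. matching (insert {u, v} E) M}"
      using matching_mono[of E _ "insert {u, v} E"] by blast
  qed
  then show ?thesis unfolding vm_def by simp
qed

theorem proposition3p8:
  fixes V :: "'a set" and E :: "'a set set" and k :: nat
  assumes "loopy_graph V E"
    and "vm E = k"
    and "\<And>e. is_edge_on V e \<Longrightarrow> e \<notin> E \<Longrightarrow> vm (insert e E) \<noteq> k"
  shows "\<forall>u\<in>V. \<forall>v\<in>V. loopy E u \<longrightarrow> loopy E v \<longrightarrow> u \<noteq> v \<longrightarrow> {u, v} \<in> E"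
proof (intro ballI impI)
  fix u v assume "u \<in> V" "v \<in> V" "loopy E u" "loopy E v" "u \<noteq> v"
  then have "is_edge_on V {u, v}" and "vm (insert {u, v} E) = k"
    using assms(2) vm_insert_edge_between_loops[of u E v]
    by (auto simp: is_edge_on_def loopy_def)
  with assms(3) show "{u, v} \<in> E" by blast
qed

end
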